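(* Let $E_1,\dots,E_d\subset\{1,\dots,l\}$ and assume that for every transition $j\to k$ of the model the function $V^{jk}$ is strictly increasing. Then, for $0\le t_1<t_2$, the matrix $\mathbf V_{\mathrm{all}}(t_2)-\mathbf V_{\mathrm{all}}(t_1)$ is invertible if and only if the vectors $\Psi_{E_1},\dots,\Psi_{E_d}$ are linearly independent.
   Context: In a Markov multi-state model on states $\{0,\dots,l\}$ with transition intensities $\lambda^{jk}$, a transition of the model is a pair $(j,k)$, $j\neq k$, with $\lambda^{jk}\not\equiv0$; let $w_1,\dots,w_{n_{\mathrm{trans}}}$ enumerate them. A transition $(j,k)$ contributes to $E\subset\{1,\dots,l\}$ if $j\notin E$ and $k\in E$. For $E$ define $\Psi_E=(\psi_{E,m})_{m=1}^{n_{\mathrm{trans}}}\in\{0,1\}^{n_{\mathrm{trans}}}$ with $\psi_{E,m}=1$ iff $w_m$ contributes to $E$. Data setting: $X$ the Markov process with $X(0)=0$, $Z\in\{0,1\}$ treatment group, $C(t)=\tilde C\wedge(t-R)_+$ the censoring time at calendar time $t$ ($R$ entry time, $\tilde C$ dropout time), $X$ independent of $(R,Z,\tilde C)$; $\mu^j(s)=\mathbb E[Z\mathbb 1\{X(s-)=j\}\mathbb 1\{s\le C(t)\}]/\mathbb E[\mathbb 1\{X(s-)=j\}\mathbb 1\{s\le C(t)\}]$, assumed not to depend on $t$; $q^{jk}(s)$ deterministic weight functions. Define $V^{jk}(t)=\int_{[0,t]}q^{jk}(s)^2\lambda^{jk}(s)\mathbb E[\mathbb 1\{X(s)=j\}\mathbb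 1\{s\le C(t)\}(Z-\mu^j(s))^2]ds$ and the $d\times d$ matrix $\mathbf V_{\mathrm{all}}(t)$ with entries $V_{\mathrm{all},c_1c_2}(t)=\sum_{k\in E_{c_1}\cap E_{c_2}}\sum_{j\notin E_{c_1}\cup E_{c_2}}V^{jk}(t)$ (sum over transitions of the model). *)

theory Defs
  imports "HOL-Analysis.Analysis" "Jordan_Normal_Form.Matrix"
begin

definition transitions :: "nat \<Rightarrow> (nat \<Rightarrow> nat \<Rightarrow> real \<Rightarrow> real) \<Rightarrow> (nat \<times> nat) set" where
  "transitions l lam = {(j,k). j \<le> l \<and> k \<le> l \<and> j \<noteq> k \<and> (\<exists>s\<ge>0. lam j k s \<noteq> 0)}"

definition contributes :: "nat \<times> nat \<Rightarrow> nat set \<Rightarrow> bool" where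
  "contributes w E \<longleftrightarrow> fst w \<notin> E \<and> snd w \<in> E"

text \<open>Psi_E with respect to an enumeration w_0,...,w_{n-1} of the transitions.\<close>
definition Psi :: "nat \<Rightarrow> (nat \<Rightarrow> nat \<times> nat) \<Rightarrow> nat set \<Rightarrow> real vec" where
  "Psi n w E = vec n (\<lambda>m. if contributes (w m) E then 1 else 0)"

definition lin_indep_family :: "nat \<Rightarrow> nat \<Rightarrow> (nat \<Rightarrow> real vec) \<Rightarrow> bool" where
  "lin_indep_family n d v \<longleftrightarrow>
     (\<forall>a :: nat \<Rightarrow> real. finsum_vec TYPE(real) n (\<lambda>c. a c \<cdot>\<^sub>v v c) {..<d} = 0\<^sub>v n
        \<longrightarrow> (\<forall>c<d. a c = 0))"

definition V_all :: "nat \<Rightarrow> (nat \<Rightarrow> nat \<Rightarrow> real \<Rightarrow> real) \<Rightarrow> (nat \<Rightarrow> nat \<Rightarrow> real \<Rightarrow> real)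
    \<Rightarrow> nat \<Rightarrow> (nat \<Rightarrow> nat set) \<Rightarrow> real \<Rightarrow> real mat" where
  "V_all l lam V d E t = mat d d (\<lambda>(c1, c2).
     \<Sum>(j,k)\<in>{(j,k)\<in>transitions l lam. k \<in> E c1 \<inter> E c2 \<and> j \<notin> E c1 \<union> E c2}. V j k t)"

end

theory Submission
  imports Defs "Jordan_Normal_Form.Determinant"
begin

text \<open>Enumerating the transitions as \<open>w\<^sub>0, \<dots>, w\<^sub>n\<^sub>-\<^sub>1\<close>, the increment
  \<open>V\<^sub>a\<^sub>l\<^sub>l(t\<^sub>2) - V\<^sub>a\<^sub>l\<^sub>l(t\<^sub>1)\<close> equals \<open>\<Psi>\<^sup>T \<Delta> \<Psi>\<close>, where \<open>\<Psi>\<close> is the \<open>n \<times> d\<close> matrix with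
  columns \<open>\<Psi>\<^sub>E\<^sub>c\<close> and \<open>\<Delta>\<close> is diagonal with the increments of \<open>V\<^sup>j\<^sup>k\<close> over \<open>[t\<^sub>1, t\<^sub>2]\<close>,
  which are positive by strict monotonicity. For such a weighted Gram matrix
  \<open>v\<^sup>T \<Psi>\<^sup>T \<Delta> \<Psi> v = \<Sum>\<^sub>m \<Delta>\<^sub>m (\<Psi> v)\<^sub>m\<^sup>2\<close>, so its kernel is the kernel of \<open>\<Psi>\<close>: it is invertible
  iff the columns of \<open>\<Psi>\<close> are linearly independent.\<close>

lemma invertible_mat_iff_det_nonzero:
  fixes A :: "'a :: field mat"
  assumes A: "A \<in> carrier_mat n n"
  shows "invertible_mat A \<longleftrightarrow> det A \<noteq> 0"
proof
  assume "invertible_mat A"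
  then obtain B where AB: "A * B = 1\<^sub>m n" and BA: "B * A = 1\<^sub>m (dim_row B)"
    using A unfolding invertible_mat_def inverts_mat_def by auto
  have "B \<in> carrier_mat n n"
    using arg_cong[OF AB, of dim_col] arg_cong[OF BA, of dim_col] A by auto
  then have "A \<in> Units (ring_mat TYPE('a) n undefined)"
    using A AB BA unfolding Units_def ring_mat_def by auto
  then show "det A \<noteq> 0" by (rule unit_imp_det_non_zero)
next
  assume "det A \<noteq> 0"
  from det_non_zero_imp_unit[OF A this, of undefined]
  obtain B where "B \<in> carrier_mat n n" "B * A = 1\<^sub>m n" "A * B = 1\<^sub>m n"
    unfolding Units_def ring_mat_def by auto
  then show "invertible_mat A"
    using A unfolding invertible_mat_def inverts_mat_def by auto
qed

lemma invertible_mat_iff_trivial_kernel: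
  fixes A :: "'a :: field mat"
  assumes A: "A \<in> carrier_mat n n"
  shows "invertible_mat A \<longleftrightarrow> (\<forall>v\<in>carrier_vec n. A *\<^sub>v v = 0\<^sub>v n \<longrightarrow> v = 0\<^sub>v n)"
  using invertible_mat_iff_det_nonzero[OF A] det_0_iff_vec_prod_zero_field[OF A] by blast

lemma lin_indep_family_vec_iff:
  "lin_indep_family n d (\<lambda>c. vec n (\<lambda>m. a m c)) \<longleftrightarrow>
     (\<forall>x. (\<forall>m<n. (\<Sum>c<d. x c * a m c) = 0) \<longrightarrow> (\<forall>c<d. x c = 0))"
proof -
  have "finsum_vec TYPE(real) n (\<lambda>c. x c \<cdot>\<^sub>v vec n (\<lambda>m. a m c)) {..<d} = 0\<^sub>v n \<longleftrightarrow>
        (\<forall>m<n. (\<Sum>c<d. x c * a m c) = 0)" for x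
  proof -
    have cl: "(\<lambda>c. x c \<cdot>\<^sub>v vec n (\<lambda>m. a m c)) \<in> {..<d} \<rightarrow> carrier_vec n" by auto
    show ?thesis
      using finsum_vec_closed[OF cl] index_finsum_vec[OF _ _ cl] by (auto simp: vec_eq_iff)
  qed
  then show ?thesis unfolding lin_indep_family_def by simp
qed

definition weighted_gram_mat :: "nat \<Rightarrow> nat \<Rightarrow> (nat \<Rightarrow> real) \<Rightarrow> (nat \<Rightarrow> nat \<Rightarrow> real) \<Rightarrow> real mat"
  where "weighted_gram_mat n d \<delta> a = mat d d (\<lambda>(i, j). \<Sum>m<n. \<delta> m * a m i * a m j)"

lemma weighted_gram_mat_carrier: "weighted_gram_mat n d \<delta> a \<in> carrier_mat d d"
  by (simp add: weighted_gram_mat_def)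

lemma weighted_gram_mult_vec_index:
  assumes v: "v \<in> carrier_vec d" and i: "i < d"
  shows "(weighted_gram_mat n d \<delta> a *\<^sub>v v) $ i = (\<Sum>m<n. \<delta> m * a m i * (\<Sum>c<d. v $ c * a m c))"
proof -
  have "(weighted_gram_mat n d \<delta> a *\<^sub>v v) $ i = (\<Sum>c<d. (\<Sum>m<n. \<delta> m * a m i * a m c) * v $ c)"
    using v i by (simp add: weighted_gram_mat_def scalar_prod_def lessThan_atLeast0)
  also have "\<dots> = (\<Sum>c<d. \<Sum>m<n. \<delta> m * a m i * (v $ c * a m c))"
    by (simp add: sum_distrib_left sum_distrib_right algebra_simps)
  also have "\<dots> = (\<Sum>m<n. \<Sum>c<d. \<delta> m * a m i * (v $ c * a m c))"
    by (rule sum.swap)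
  also have "\<dots> = (\<Sum>m<n. \<delta> m * a m i * (\<Sum>c<d. v $ c * a m c))"
    by (simp add: sum_distrib_left)
  finally show ?thesis .
qed

lemma weighted_gram_quadratic_form:
  assumes v: "v \<in> carrier_vec d"
  shows "(\<Sum>i<d. v $ i * (weighted_gram_mat n d \<delta> a *\<^sub>v v) $ i) =
         (\<Sum>m<n. \<delta> m * (\<Sum>c<d. v $ c * a m c)\<^sup>2)"
proof -
  have "(\<Sum>i<d. v $ i * (weighted_gram_mat n d \<delta> a *\<^sub>v v) $ i) =
        (\<Sum>i<d. \<Sum>m<n. v $ i * (\<delta> m * a m i * (\<Sum>c<d. v $ c * a m c)))"
    using weighted_gram_mult_vec_index[OF v] by (simp add: sum_distrib_left)
  also have "\<dots> = (\<Sum>m<n. \<delta> m * (\<Sum>c<d. v $ c * a m c)\<^sup>2)"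
    by (subst sum.swap)
      (simp add: power2_eq_square sum_distrib_left sum_distrib_right algebra_simps)
  finally show ?thesis .
qed

lemma weighted_gram_mult_vec_eq_0_iff:
  assumes pos: "\<forall>m<n. 0 < \<delta> m" and v: "v \<in> carrier_vec d"
  shows "weighted_gram_mat n d \<delta> a *\<^sub>v v = 0\<^sub>v d \<longleftrightarrow> (\<forall>m<n. (\<Sum>c<d. v $ c * a m c) = 0)"
proof
  assume "weighted_gram_mat n d \<delta> a *\<^sub>v v = 0\<^sub>v d"
  then have "(\<Sum>m<n. \<delta> m * (\<Sum>c<d. v $ c * a m c)\<^sup>2) = 0"
    using weighted_gram_quadratic_form[OF v, of n \<delta> a] by simp
  then have "\<forall>m<n. \<delta> m * (\<Sum>c<d. v $ c * a m c)\<^sup>2 = 0"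
    using pos by (subst (asm) sum_nonneg_eq_0_iff) (auto simp: less_imp_le)
  then show "\<forall>m<n. (\<Sum>c<d. v $ c * a m c) = 0"
    using pos by (metis mult_eq_0_iff power_eq_0_iff less_irrefl)
next
  assume "\<forall>m<n. (\<Sum>c<d. v $ c * a m c) = 0"
  then show "weighted_gram_mat n d \<delta> a *\<^sub>v v = 0\<^sub>v d"
    using v weighted_gram_mult_vec_index[OF v]
    by (intro eq_vecI) (auto simp: weighted_gram_mat_def)
qed

lemma invertible_weighted_gram_mat_iff:
  assumes pos: "\<forall>m<n. 0 < \<delta> m"
  shows "invertible_mat (weighted_gram_mat n d \<delta> a) \<longleftrightarrow>
         lin_indep_family n d (\<lambda>c. vec n (\<lambda>m. a m c))"
proof -
  have "invertible_mat (weighted_gram_mat n d \<delta> a) \<longleftrightarrow>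
        (\<forall>v\<in>carrier_vec d. (\<forall>m<n. (\<Sum>c<d. v $ c * a m c) = 0) \<longrightarrow> v = 0\<^sub>v d)"
    using invertible_mat_iff_trivial_kernel[OF weighted_gram_mat_carrier]
      weighted_gram_mult_vec_eq_0_iff[OF pos] by auto
  also have "\<dots> \<longleftrightarrow> (\<forall>x. (\<forall>m<n. (\<Sum>c<d. x c * a m c) = 0) \<longrightarrow> (\<forall>c<d. x c = 0))"
  proof (intro iffI allI impI ballI)
    fix x c
    assume "\<forall>v\<in>carrier_vec d. (\<forall>m<n. (\<Sum>c<d. v $ c * a m c) = 0) \<longrightarrow> v = 0\<^sub>v d"
      and "\<forall>m<n. (\<Sum>c<d. x c * a m c) = 0" and "c < d"
    moreover have "(\<Sum>c<d. vec d x $ c * a m c) = (\<Sum>c<d. x c * a m c)" for m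
      by (rule sum.cong) auto
    ultimately show "x c = 0"
      by (metis index_vec index_zero_vec(1) vec_carrier)
  next
    fix v :: "real vec"
    assume "\<forall>x. (\<forall>m<n. (\<Sum>c<d. x c * a m c) = 0) \<longrightarrow> (\<forall>c<d. x c = 0)"
      and "v \<in> carrier_vec d" and "\<forall>m<n. (\<Sum>c<d. v $ c * a m c) = 0"
    then show "v = 0\<^sub>v d"
      by (intro eq_vecI) auto
  qed
  finally show ?thesis
    by (simp add: lin_indep_family_vec_iff)
qed

lemma V_all_diff_eq_weighted_gram_mat:
  assumes enum: "bij_betw w {..<n} (transitions l lam)"
  shows "V_all l lam V d E t' - V_all l lam V d E t =
    weighted_gram_mat n d (\<lambda>m. V (fst (w m)) (snd (w m)) t' - V (fst (w m)) (snd (w m)) t)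
      (\<lambda>m c. if contributes (w m) (E c) then 1 else 0)"
    (is "?D = ?G")
proof (rule eq_matI)
  fix i j assume i: "i < dim_row ?G" and j: "j < dim_col ?G"
  let ?in = "\<lambda>p :: nat \<times> nat. snd p \<in> E i \<inter> E j \<and> fst p \<notin> E i \<union> E j"
  let ?inc = "\<lambda>p :: nat \<times> nat. V (fst p) (snd p) t' - V (fst p) (snd p) t"
  have fin: "finite (transitions l lam)"
    using bij_betw_finite enum by blast
  have "(V_all l lam V d E t' - V_all l lam V d E t) $$ (i, j) =
        (\<Sum>p\<in>{p \<in> transitions l lam. ?in p}. ?inc p)"
    using i j by (simp add: V_all_def weighted_gram_mat_def split_def sum_subtractf)
  also have "\<dots> = (\<Sum>p\<in>transitions l lam. if ?in p then ?inc p else 0)"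
    using fin by (simp add: sum.inter_filter)
  also have "\<dots> = (\<Sum>m<n. if ?in (w m) then ?inc (w m) else 0)"
    by (rule sum.reindex_bij_betw[OF enum, symmetric])
  also have "\<dots> = weighted_gram_mat n d (\<lambda>m. ?inc (w m))
      (\<lambda>m c. if contributes (w m) (E c) then 1 else 0) $$ (i, j)"
    using i j by (auto simp: weighted_gram_mat_def contributes_def intro: sum.cong)
  finally show "?D $$ (i, j) = ?G $$ (i, j)" .
qed (auto simp: V_all_def weighted_gram_mat_def)

theorem lemma3:
  fixes l d n :: nat
    and lam :: "nat \<Rightarrow> nat \<Rightarrow> real \<Rightarrow> real"
    and V :: "nat \<Rightarrow> nat \<Rightarrow> real \<Rightarrow> real"
    and E :: "nat \<Rightarrow> nat set"
    and w :: "nat \<Rightarrow> nat \<times> nat"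
    and t1 t2 :: real
  assumes enum: "bij_betw w {..<n} (transitions l lam)"
    and E_sub: "\<forall>c<d. E c \<subseteq> {1..l}"
    and V_incr: "\<forall>(j,k)\<in>transitions l lam. strict_mono_on {0..} (V j k)"
    and t1: "0 \<le> t1" and t12: "t1 < t2"
  shows "invertible_mat (V_all l lam V d E t2 - V_all l lam V d E t1)
           \<longleftrightarrow> lin_indep_family n d (\<lambda>c. Psi n w (E c))"
proof -
  have "0 < V (fst (w m)) (snd (w m)) t2 - V (fst (w m)) (snd (w m)) t1" if "m < n" for m
  proof -
    have "w m \<in> transitions l lam"
      using enum that by (auto simp: bij_betw_def)
    then have "strict_mono_on {0..} (V (fst (w m)) (snd (w m)))"
      using V_incr by auto
    then show ?thesis
      using t1 t12 by (simp add: strict_mono_on_def)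
  qed
  then show ?thesis
    unfolding V_all_diff_eq_weighted_gram_mat[OF enum] Psi_def
    by (simp add: invertible_weighted_gram_mat_iff)
qed

end
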